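(* Let $n\ge1$, $V:\mathbb{R}\to\mathcal{S}_n$ bounded, $h=-\partial_{xx}^2+V$ self-adjoint on $L^2(\mathbb{R},\mathbb{C}^n)$ with domain $H^2(\mathbb{R},\mathbb{C}^n)$. For every $E\in\mathbb{R}\setminus\sigma(h)$, the sets $\ell^+(E)$ and $\ell^-(E)$ are Lagrangian planes of $\mathcal{H}_b$, and $\mathcal{H}_b=\ell^+(E)\oplus\ell^-(E)$.
   Context: $\mathcal{S}_n$ = Hermitian $n\times n$ matrices. $\mathcal{H}_b=\mathbb{C}^n\times\mathbb{C}^n$ with $\omega((z_1,z_1'),(z_2,z_2'))=\langle z_1,z_2'\rangle-\langle z_1',z_2\rangle$; $\ell^\circ=\{x:\omega(x,y)=0\ \forall y\in\ell\}$; $\ell$ Lagrangian iff $\ell=\ell^\circ$. $\ell^\pm(E):=\{(\psi(0),\psi'(0)):\psi\in H^2(\mathbb{R}^\pm,\mathbb{C}^n),\ -\psi''+V\psi=E\psi\text{ on }\mathbb{R}^\pm\}$. *)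

theory Defs
  imports "HOL-Analysis.Analysis"
begin

definition cinner :: "complex^'n \<Rightarrow> complex^'n \<Rightarrow> complex" where
  "cinner z w = (\<Sum>i\<in>UNIV. cnj (z $ i) * w $ i)"

definition omega :: "((complex^'n) \<times> (complex^'n)) \<Rightarrow> ((complex^'n) \<times> (complex^'n)) \<Rightarrow> complex" where
  "omega x y = cinner (fst x) (snd y) - cinner (snd x) (fst y)"

definition annihilator :: "((complex^'n) \<times> (complex^'n)) set \<Rightarrow> ((complex^'n) \<times> (complex^'n)) set" where
  "annihilator L = {x. \<forall>y\<in>L. omega x y = 0}"

definition lagrangian :: "((complex^'n) \<times> (complex^'n)) set \<Rightarrow> bool" where
  "lagrangian L \<longleftrightarrow> L = annihilator L"

definition hermitian_mat :: "complex^'n^'n \<Rightarrow> bool" where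
  "hermitian_mat A \<longleftrightarrow> (\<forall>i j. A $ i $ j = cnj (A $ j $ i))"

definition square_integrable :: "real set \<Rightarrow> (real \<Rightarrow> complex^'n) \<Rightarrow> bool" where
  "square_integrable S f \<longleftrightarrow> f measurable_on S \<and> (\<lambda>x. (norm (f x))\<^sup>2) integrable_on S"

text \<open>H^2(S) on an interval S, via the absolutely continuous representative:
  psi is differentiable on S (one-sided at endpoints) with derivative psi1,
  psi1 is absolutely continuous with a.e. derivative psi2 (i.e. psi1 is the
  indefinite integral of psi2), and psi, psi1, psi2 are all in L^2(S).\<close>
definition H2_repr :: "real set \<Rightarrow> (real \<Rightarrow> complex^'n) \<Rightarrow> (real \<Rightarrow> complex^'n)
                       \<Rightarrow> (real \<Rightarrow> complex^'n) \<Rightarrow> bool" where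
  "H2_repr S \<psi> \<psi>1 \<psi>2 \<longleftrightarrow>
     (\<forall>x\<in>S. (\<psi> has_vector_derivative \<psi>1 x) (at x within S)) \<and>
     (\<forall>a\<in>S. \<forall>b\<in>S. a \<le> b \<longrightarrow> (\<psi>2 has_integral (\<psi>1 b - \<psi>1 a)) {a..b}) \<and>
     square_integrable S \<psi> \<and> square_integrable S \<psi>1 \<and> square_integrable S \<psi>2"

definition ell :: "real set \<Rightarrow> (real \<Rightarrow> complex^'n^'n) \<Rightarrow> real \<Rightarrow> ((complex^'n) \<times> (complex^'n)) set" where
  "ell S V E = {(\<psi> 0, \<psi>1 0) | \<psi> \<psi>1 \<psi>2. H2_repr S \<psi> \<psi>1 \<psi>2 \<and>
       negligible {x\<in>S. \<psi>2 x \<noteq> V x *v \<psi> x - complex_of_real E *s \<psi> x}}"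

definition ell_plus where "ell_plus V E = ell {0..} V E"
definition ell_minus where "ell_minus V E = ell {..0} V E"

text \<open>Spectrum of h = -d^2/dx^2 + V with domain H^2(R): z is in the resolvent set iff
  h - z : H^2(R) \<rightarrow> L^2(R) is bijective (bounded inverse is automatic for the
  closed operator h).\<close>
definition schrodinger_spectrum :: "(real \<Rightarrow> complex^'n^'n) \<Rightarrow> complex set" where
  "schrodinger_spectrum V = {z. \<not> (
     (\<forall>f. square_integrable UNIV f \<longrightarrow>
        (\<exists>\<psi> \<psi>1 \<psi>2. H2_repr UNIV \<psi> \<psi>1 \<psi>2 \<and>
           negligible {x. - \<psi>2 x + V x *v \<psi> x - z *s \<psi> x \<noteq> f x})) \<and>
     (\<forall>\<psi> \<psi>1 \<psi>2. H2_repr UNIV \<psi> \<psi>1 \<psi>2 \<and>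
           negligible {x. - \<psi>2 x + V x *v \<psi> x - z *s \<psi> x \<noteq> 0} \<longrightarrow> (\<forall>x. \<psi> x = 0)))}"

end

theory Submission
  imports Defs
begin

(* The boundary form omega, evaluated on the Cauchy data (psi x, psi' x) and (phi x, phi' x) of two
   solutions of -psi'' + V psi = E psi, is their Wronskian. Integration by parts, together with the
   hermiticity of V, shows that it does not depend on x. On a half-line it is bounded by an integrable
   function, so it vanishes: l+(E) and l-(E) are isotropic. A common element of l+(E) and l-(E) is the
   Cauchy datum at 0 of an H^2 eigenfunction of h obtained by gluing two half-line solutions, hence it
   is 0 because E is not in the spectrum. Every (a, b) is the Cauchy datum at 0 of an exponentially
   decaying u on [0, oo); solving (h - E) w = f, where f is (h - E) u on (0, oo) and 0 elsewhere,
   writes (a, b) as the datum of u - w, a solution on [0, oo), plus that of w, a solution on (-oo, 0].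
   Finally, two isotropic subspaces that together span H_b are Lagrangian because omega is
   non-degenerate. *)

section \<open>Integration by parts for indefinite integrals\<close>

lemma sigma_finite_lebesgue: "sigma_finite_measure (lebesgue :: 'a::euclidean_space measure)"
proof -
  obtain A :: "'a set set" where "countable A" "A \<subseteq> sets lborel" "\<Union>A = space lborel"
      "\<forall>a\<in>A. emeasure lborel a \<noteq> \<infinity>"
    using sigma_finite_measure.sigma_finite_countable[OF sigma_finite_lborel] by blast
  then show ?thesis
    by unfold_locales (intro exI[of _ A], auto simp: emeasure_completion)
qed

lemma (in pair_sigma_finite)
  fixes prod :: "'u::{banach, second_countable_topology} \<Rightarrow> 'v::{banach, second_countable_topology}
                   \<Rightarrow> 'w::{banach, second_countable_topology}"
  assumes prod: "bounded_bilinear prod" and u: "integrable M1 u" and v: "integrable M2 v"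
  shows integrable_bilinear_product: "integrable (M1 \<Otimes>\<^sub>M M2) (\<lambda>(t, x). prod (u t) (v x))"
    and integral_bilinear_product:
      "(\<integral>(t, x). prod (u t) (v x) \<partial>(M1 \<Otimes>\<^sub>M M2)) = prod (integral\<^sup>L M1 u) (integral\<^sup>L M2 v)"
proof -
  interpret prod: bounded_bilinear prod by (fact prod)
  obtain K where K: "\<And>a b. norm (prod a b) \<le> norm a * norm b * K" and "K \<ge> 0"
    using prod.nonneg_bounded by blast
  have [measurable]: "u \<in> borel_measurable M1" "v \<in> borel_measurable M2"
    using u v by (simp_all add: borel_measurable_integrable)
  have "continuous_on UNIV (\<lambda>p. prod (fst p) (snd p))"
    by (intro prod.continuous_on continuous_intros)
  then have "(\<lambda>p. prod (fst p) (snd p)) \<in> borel_measurable borel"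
    by (rule borel_measurable_continuous_onI)
  from measurable_compose[OF _ this, of "\<lambda>p. (u (fst p), v (snd p))"]
  have meas: "(\<lambda>(t, x). prod (u t) (v x)) \<in> borel_measurable (M1 \<Otimes>\<^sub>M M2)"
    unfolding case_prod_beta by simp
  show int: "integrable (M1 \<Otimes>\<^sub>M M2) (\<lambda>(t, x). prod (u t) (v x))"
  proof (rule Bochner_Integration.integrable_bound[OF _ meas])
    let ?h = "\<lambda>(t, x). norm (u t) * norm (v x) * K"
    show "integrable (M1 \<Otimes>\<^sub>M M2) ?h"
    proof (rule Fubini_integrable)
      have "integrable M1 (\<lambda>t. norm (u t) * ((\<integral>x. norm (v x) \<partial>M2) * K))"
        by (intro integrable_mult_left integrable_norm u)
      then show "integrable M1 (\<lambda>t. \<integral>x. norm (?h (t, x)) \<partial>M2)"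
        using \<open>K \<ge> 0\<close> by (simp add: abs_mult mult.assoc)
      show "AE t in M1. integrable M2 (\<lambda>x. ?h (t, x))"
        by (simp add: integrable_mult_right integrable_mult_left v)
    qed measurable
    show "AE p in M1 \<Otimes>\<^sub>M M2. norm ((\<lambda>(t, x). prod (u t) (v x)) p) \<le> norm (?h p)"
      using K \<open>K \<ge> 0\<close> by (intro AE_I2) (auto simp: case_prod_beta)
  qed
  have "(\<integral>(t, x). prod (u t) (v x) \<partial>(M1 \<Otimes>\<^sub>M M2)) = (\<integral>t. \<integral>x. prod (u t) (v x) \<partial>M2 \<partial>M1)"
    using integral_fst'[OF int] by simp
  also have "\<dots> = prod (integral\<^sup>L M1 u) (integral\<^sup>L M2 v)"
    using u v by (simp add: integral_bounded_linear[OF prod.bounded_linear_right]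
                            integral_bounded_linear[OF prod.bounded_linear_left])
  finally show "(\<integral>(t, x). prod (u t) (v x) \<partial>(M1 \<Otimes>\<^sub>M M2)) = prod (integral\<^sup>L M1 u) (integral\<^sup>L M2 v)" .
qed

lemma
  fixes prod :: "'a::{banach, second_countable_topology} \<Rightarrow> 'b::{banach, second_countable_topology}
                   \<Rightarrow> 'c::{banach, second_countable_topology}"
    and u :: "real \<Rightarrow> 'a" and v :: "real \<Rightarrow> 'b"
  assumes prod: "bounded_bilinear prod" and u: "integrable lebesgue u" and v: "integrable lebesgue v"
  defines "U \<equiv> \<lambda>x. \<integral>t. indicator {..x} t *\<^sub>R u t \<partial>lebesgue"
    and "V \<equiv> \<lambda>t. \<integral>x. indicator {..<t} x *\<^sub>R v x \<partial>lebesgue"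
  shows integrable_bilinear_lower_triangle: "integrable lebesgue (\<lambda>x. prod (U x) (v x))"
    and integrable_bilinear_upper_triangle: "integrable lebesgue (\<lambda>t. prod (u t) (V t))"
    and integral_bilinear_triangles:
      "(\<integral>x. prod (U x) (v x) \<partial>lebesgue) + (\<integral>t. prod (u t) (V t) \<partial>lebesgue)
         = prod (integral\<^sup>L lebesgue u) (integral\<^sup>L lebesgue v)"
proof -
  interpret prod: bounded_bilinear prod by (fact prod)
  interpret P: pair_sigma_finite "lebesgue :: real measure" "lebesgue :: real measure"
    by (intro pair_sigma_finite.intro sigma_finite_lebesgue)
  define k where "k = (\<lambda>(t, x). prod (u t) (v x))"
  have k_int: "integrable (lebesgue \<Otimes>\<^sub>M lebesgue) k"
    unfolding k_def by (rule P.integrable_bilinear_product[OF prod u v])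
  have [measurable]: "k \<in> borel_measurable (lebesgue \<Otimes>\<^sub>M lebesgue)" "(\<lambda>x::real. x) \<in> borel_measurable lebesgue"
    using k_int by (simp_all add: measurable_completion)
  define T1 where "T1 = (\<lambda>t x. if t \<le> x then k (t, x) else 0)"
  define T2 where "T2 = (\<lambda>t x. if t \<le> x then 0 else k (t, x))"
  have T1_int: "integrable (lebesgue \<Otimes>\<^sub>M lebesgue) (case_prod T1)"
    and T2_int: "integrable (lebesgue \<Otimes>\<^sub>M lebesgue) (case_prod T2)"
    unfolding T1_def T2_def
    by (auto intro!: Bochner_Integration.integrable_bound[OF k_int] AE_I2)
  have "T1 t x = prod (indicator {..x} t *\<^sub>R u t) (v x)" for t x
    by (simp add: T1_def k_def indicator_def prod.zero_left)
  then have inner1: "(\<integral>t. T1 t x \<partial>lebesgue) = prod (U x) (v x)" for x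
    using u by (simp add: U_def integral_bounded_linear[OF prod.bounded_linear_left] integrable_mult_indicator)
  have "T2 t x = prod (u t) (indicator {..<t} x *\<^sub>R v x)" for t x
    by (simp add: T2_def k_def indicator_def prod.zero_right)
  then have inner2: "(\<integral>x. T2 t x \<partial>lebesgue) = prod (u t) (V t)" for t
    using v by (simp add: V_def integral_bounded_linear[OF prod.bounded_linear_right] integrable_mult_indicator)
  show "integrable lebesgue (\<lambda>x. prod (U x) (v x))"
    using P.integrable_snd[OF T1_int] inner1 by simp
  show "integrable lebesgue (\<lambda>t. prod (u t) (V t))"
    using P.integrable_fst[OF T2_int] inner2 by simp
  have "(\<integral>x. prod (U x) (v x) \<partial>lebesgue) + (\<integral>t. prod (u t) (V t) \<partial>lebesgue)
      = integral\<^sup>L (lebesgue \<Otimes>\<^sub>M lebesgue) (case_prod T1) + integral\<^sup>L (lebesgue \<Otimes>\<^sub>M lebesgue) (case_prod T2)"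
    using P.integral_snd[OF T1_int] P.integral_fst[OF T2_int] inner1 inner2 by simp
  also have "\<dots> = integral\<^sup>L (lebesgue \<Otimes>\<^sub>M lebesgue) k"
    by (subst Bochner_Integration.integral_add[OF T1_int T2_int, symmetric])
       (auto simp: T1_def T2_def intro: Bochner_Integration.integral_cong)
  also have "\<dots> = prod (integral\<^sup>L lebesgue u) (integral\<^sup>L lebesgue v)"
    unfolding k_def by (rule P.integral_bilinear_product[OF prod u v])
  finally show "(\<integral>x. prod (U x) (v x) \<partial>lebesgue) + (\<integral>t. prod (u t) (V t) \<partial>lebesgue)
      = prod (integral\<^sup>L lebesgue u) (integral\<^sup>L lebesgue v)" .
qed

lemma integral_indicator_eq_has_integral:
  fixes h :: "'a::euclidean_space \<Rightarrow> 'b::euclidean_space"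
  assumes "h absolutely_integrable_on I" and "(h has_integral c) I"
  shows "(\<integral>t. indicator I t *\<^sub>R h t \<partial>lebesgue) = c"
  using set_lebesgue_integral_eq_integral(2)[OF assms(1)] assms(2)
  by (simp add: set_lebesgue_integral_def integral_unique)

lemma integral_indicator_Icc_indefinite:
  fixes h :: "real \<Rightarrow> 'a::euclidean_space"
  assumes h: "h absolutely_integrable_on {a..b}" and x: "x \<in> {a..b}" and c: "(h has_integral c) {a..x}"
  shows "(\<integral>t. indicator {..x} t *\<^sub>R (indicator {a..b} t *\<^sub>R h t) \<partial>lebesgue) = c"
    and "(\<integral>t. indicator {..<x} t *\<^sub>R (indicator {a..b} t *\<^sub>R h t) \<partial>lebesgue) = c"
proof -
  have restrict: "indicator {..x} t *\<^sub>R (indicator {a..b} t *\<^sub>R h t) = indicator {a..x} t *\<^sub>R h t"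
    "indicator {..<x} t *\<^sub>R (indicator {a..b} t *\<^sub>R h t) = indicator {a..<x} t *\<^sub>R h t" for t
    using x by (auto simp: indicator_def)
  have "h absolutely_integrable_on {a..x}" "h absolutely_integrable_on {a..<x}"
    using x by (auto intro: set_integrable_subset[OF h])
  moreover have "(h has_integral c) {a..<x}"
    using c by (rule has_integral_spike_set_eq[THEN iffD1, rotated -1])
      (auto intro: negligible_subset[OF negligible_sing[of x]])
  ultimately show "(\<integral>t. indicator {..x} t *\<^sub>R (indicator {a..b} t *\<^sub>R h t) \<partial>lebesgue) = c"
    "(\<integral>t. indicator {..<x} t *\<^sub>R (indicator {a..b} t *\<^sub>R h t) \<partial>lebesgue) = c"
    using c by (simp_all only: restrict integral_indicator_eq_has_integral)
qed

lemma integration_by_parts_indefinite_integrals: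
  fixes prod :: "'a::euclidean_space \<Rightarrow> 'b::euclidean_space \<Rightarrow> 'c::euclidean_space"
    and f f' :: "real \<Rightarrow> 'a" and g g' :: "real \<Rightarrow> 'b"
  assumes prod: "bounded_bilinear prod" and ab: "a \<le> b"
    and f': "f' absolutely_integrable_on {a..b}" and g': "g' absolutely_integrable_on {a..b}"
    and f: "\<And>x. x \<in> {a..b} \<Longrightarrow> (f' has_integral (f x - f a)) {a..x}"
    and g: "\<And>x. x \<in> {a..b} \<Longrightarrow> (g' has_integral (g x - g a)) {a..x}"
  shows "((\<lambda>x. prod (f' x) (g x) + prod (f x) (g' x)) has_integral
           (prod (f b) (g b) - prod (f a) (g a))) {a..b}"
proof -
  interpret prod: bounded_bilinear prod by (fact prod)
  define fi where "fi = (\<lambda>t. indicator {a..b} t *\<^sub>R f' t)"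
  define gi where "gi = (\<lambda>t. indicator {a..b} t *\<^sub>R g' t)"
  have fi: "integrable lebesgue fi" and gi: "integrable lebesgue gi"
    using f' g' by (simp_all add: set_integrable_def fi_def gi_def)
  define U where "U = (\<lambda>x. \<integral>t. indicator {..x} t *\<^sub>R fi t \<partial>lebesgue)"
  define V where "V = (\<lambda>t. \<integral>x. indicator {..<t} x *\<^sub>R gi x \<partial>lebesgue)"
  have "U x = f x - f a" if "x \<in> {a..b}" for x
    using integral_indicator_Icc_indefinite(1)[OF f' that f[OF that]] by (simp add: U_def fi_def)
  then have "prod (U x) (gi x) = indicator {a..b} x *\<^sub>R prod (f x - f a) (g' x)" for x
    by (simp add: gi_def indicator_def prod.zero_right)
  with integrable_bilinear_lower_triangle[OF prod fi gi]
  have lower: "((\<lambda>x. prod (f x - f a) (g' x)) has_integral (\<integral>x. prod (U x) (gi x) \<partial>lebesgue)) {a..b}"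
    using has_integral_set_lebesgue[of "{a..b}" "\<lambda>x. prod (f x - f a) (g' x)"]
    by (simp add: U_def set_integrable_def set_lebesgue_integral_def)
  have "V t = g t - g a" if "t \<in> {a..b}" for t
    using integral_indicator_Icc_indefinite(2)[OF g' that g[OF that]] by (simp add: V_def gi_def)
  then have "prod (fi t) (V t) = indicator {a..b} t *\<^sub>R prod (f' t) (g t - g a)" for t
    by (simp add: fi_def indicator_def prod.zero_left)
  with integrable_bilinear_upper_triangle[OF prod fi gi]
  have upper: "((\<lambda>t. prod (f' t) (g t - g a)) has_integral (\<integral>t. prod (fi t) (V t) \<partial>lebesgue)) {a..b}"
    using has_integral_set_lebesgue[of "{a..b}" "\<lambda>t. prod (f' t) (g t - g a)"]
    by (simp add: V_def set_integrable_def set_lebesgue_integral_def)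
  have triangles: "(\<integral>x. prod (U x) (gi x) \<partial>lebesgue) + (\<integral>t. prod (fi t) (V t) \<partial>lebesgue)
      = prod (f b - f a) (g b - g a)"
    using integral_bilinear_triangles[OF prod fi gi] f[of b] g[of b] ab
    by (simp add: U_def V_def fi_def gi_def integral_indicator_eq_has_integral f' g')
  have left: "((\<lambda>x. prod (f a) (g' x)) has_integral prod (f a) (g b - g a)) {a..b}"
    using has_integral_linear[OF g[of b] prod.bounded_linear_right] ab by (simp add: o_def)
  have right: "((\<lambda>x. prod (f' x) (g a)) has_integral prod (f b - f a) (g a)) {a..b}"
    using has_integral_linear[OF f[of b] prod.bounded_linear_left] ab by (simp add: o_def)
  show ?thesis
    using has_integral_add[OF has_integral_add[OF lower left] has_integral_add[OF upper right]] triangles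
    by (simp add: prod.diff_left prod.diff_right algebra_simps)
qed

section \<open>The boundary form\<close>

lemma bilinear_cinner: "bilinear cinner"
  unfolding bilinear_def linear_iff cinner_def
  by (simp add: sum.distrib scaleR_sum_right algebra_simps flip: of_real_def)

lemma cinner_norm_le: "norm (cinner z w) \<le> norm z * norm w"
proof -
  have "norm (cinner z w) \<le> (\<Sum>i\<in>UNIV. norm (z $ i) * norm (w $ i))"
    unfolding cinner_def by (rule order_trans[OF norm_sum]) (simp add: norm_mult)
  also have "\<dots> \<le> norm z * norm w"
    using L2_set_mult_ineq[of "\<lambda>i. norm (z $ i)" "\<lambda>i. norm (w $ i)" UNIV]
    by (simp add: norm_vec_def)
  finally show ?thesis .
qed

lemma cinner_axis_right: "cinner z (axis i 1) = cnj (z $ i)"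
  by (simp add: cinner_def axis_def if_distrib[of "\<lambda>a. _ * a"] cong: if_cong)

lemma cinner_hermitian_mat:
  assumes "hermitian_mat A"
  shows "cinner z (A *v w) = cinner (A *v z) w"
proof -
  have "cinner z (A *v w) = (\<Sum>i\<in>UNIV. \<Sum>j\<in>UNIV. cnj (z $ i) * A $ i $ j * w $ j)"
    by (simp add: cinner_def matrix_vector_mult_def sum_distrib_left mult.assoc)
  also have "\<dots> = (\<Sum>j\<in>UNIV. \<Sum>i\<in>UNIV. cnj (A $ j $ i * z $ i) * w $ j)"
  proof (subst sum.swap, intro sum.cong refl)
    fix i j
    have "A $ i $ j = cnj (A $ j $ i)"
      using assms unfolding hermitian_mat_def by blast
    then show "cnj (z $ i) * A $ i $ j * w $ j = cnj (A $ j $ i * z $ i) * w $ j"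
      by simp
  qed
  also have "\<dots> = cinner (A *v z) w"
    by (simp add: cinner_def matrix_vector_mult_def sum_distrib_right)
  finally show ?thesis .
qed

lemma of_real_vector_smult: "complex_of_real r *s v = r *\<^sub>R v"
  by (simp add: vec_eq_iff scaleR_conv_of_real[where 'a = complex])

lemma cinner_hermitian_mat_shift:
  assumes "hermitian_mat A"
  shows "cinner z (A *v w - complex_of_real E *s w) = cinner (A *v z - complex_of_real E *s z) w"
  using cinner_hermitian_mat[OF assms, of z w]
  by (simp add: of_real_vector_smult bilinear_rsub[OF bilinear_cinner] bilinear_lsub[OF bilinear_cinner]
                bilinear_rmul[OF bilinear_cinner] bilinear_lmul[OF bilinear_cinner])

lemma bilinear_omega: "bilinear omega"
  unfolding bilinear_def linear_iff omega_def
  by (simp add: bilinear_ladd[OF bilinear_cinner] bilinear_radd[OF bilinear_cinner]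
                bilinear_lmul[OF bilinear_cinner] bilinear_rmul[OF bilinear_cinner]
                scaleR_right_diff_distrib)

lemma omega_nondegenerate:
  assumes "\<And>y. omega x y = 0"
  shows "x = 0"
proof -
  have "fst x $ i = 0" "snd x $ i = 0" for i
    using assms[of "(0, axis i 1)"] assms[of "(axis i 1, 0)"]
    by (simp_all add: omega_def cinner_axis_right bilinear_rzero[OF bilinear_cinner])
  then show ?thesis
    by (simp add: prod_eq_iff vec_eq_iff)
qed

definition isotropic :: "((complex^'n) \<times> (complex^'n)) set \<Rightarrow> bool" where
  "isotropic L \<longleftrightarrow> (\<forall>p\<in>L. \<forall>q\<in>L. omega p q = 0)"

lemma lagrangian_if_isotropic_complement:
  assumes L: "isotropic L" and M: "isotropic M" and span: "\<And>x. \<exists>a\<in>L. \<exists>b\<in>M. x = a + b"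
  shows "lagrangian L"
  unfolding lagrangian_def
proof
  show "L \<subseteq> annihilator L"
    using L by (auto simp: isotropic_def annihilator_def)
  show "annihilator L \<subseteq> L"
  proof
    fix x assume x: "x \<in> annihilator L"
    obtain a b where "a \<in> L" "b \<in> M" "x = a + b"
      using span by blast
    have "omega b y = 0" for y
    proof -
      obtain c d where "c \<in> L" "d \<in> M" "y = c + d"
        using span by blast
      have "omega b c = omega x c - omega a c"
        using \<open>x = a + b\<close> bilinear_lsub[OF bilinear_omega, of x a c] by simp
      also have "\<dots> = 0"
        using x L \<open>a \<in> L\<close> \<open>c \<in> L\<close> by (simp add: annihilator_def isotropic_def)
      finally show ?thesis
        using M \<open>b \<in> M\<close> \<open>d \<in> M\<close> \<open>y = c + d\<close>
        by (simp add: bilinear_radd[OF bilinear_omega] isotropic_def)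
    qed
    then have "b = 0"
      by (rule omega_nondegenerate)
    then show "x \<in> L"
      using \<open>a \<in> L\<close> \<open>x = a + b\<close> by simp
  qed
qed

section \<open>Square-integrable functions and \<open>H\<^sup>2\<close> representatives\<close>

lemma bilinear_matrix_vector_mult: "bilinear ((*v) :: complex^'n^'m \<Rightarrow> complex^'n \<Rightarrow> complex^'m)"
  by (simp add: bilinear_def linear_iff vec_eq_iff matrix_vector_mult_def sum.distrib
                scaleR_sum_right algebra_simps)

lemma square_integrableI:
  fixes h :: "real \<Rightarrow> complex^'n"
  assumes h: "h measurable_on S" and S: "S \<in> sets lebesgue"
    and G: "G integrable_on S" and le: "\<And>x. x \<in> S \<Longrightarrow> (norm (h x))\<^sup>2 \<le> G x"
  shows "square_integrable S h"
proof -
  have [measurable]: "h \<in> borel_measurable (lebesgue_on S)"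
    using h S by (simp add: measurable_on_iff_borel_measurable)
  have "(\<lambda>x. (norm (h x))\<^sup>2) integrable_on S"
    by (rule measurable_bounded_by_integrable_imp_integrable[OF _ G _ S]) (use le in auto)
  with h show ?thesis
    by (simp add: square_integrable_def)
qed

lemma square_integrable_diff:
  assumes f: "square_integrable S f" and g: "square_integrable S g" and S: "S \<in> sets lebesgue"
  shows "square_integrable S (\<lambda>x. f x - g x)"
proof (rule square_integrableI)
  show "(\<lambda>x. f x - g x) measurable_on S"
    using f g by (simp add: square_integrable_def measurable_on_diff)
  show "(\<lambda>x. 2 * (norm (f x))\<^sup>2 + 2 * (norm (g x))\<^sup>2) integrable_on S"
    using f g by (simp add: square_integrable_def integrable_add integrable_on_mult_right)
  show "(norm (f x - g x))\<^sup>2 \<le> 2 * (norm (f x))\<^sup>2 + 2 * (norm (g x))\<^sup>2" for x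
  proof -
    have "(norm (f x - g x))\<^sup>2 \<le> (norm (f x) + norm (g x))\<^sup>2"
      by (simp add: power_mono norm_triangle_ineq4)
    also have "\<dots> \<le> 2 * (norm (f x))\<^sup>2 + 2 * (norm (g x))\<^sup>2"
      using sum_squares_bound[of "norm (f x)" "norm (g x)"] by (simp add: power2_sum)
    finally show ?thesis .
  qed
qed (fact S)

lemma square_integrable_bilinear:
  fixes h :: "'a::euclidean_space \<Rightarrow> complex^'n \<Rightarrow> complex^'m"
  assumes h: "bilinear h" and A: "A measurable_on S" "bounded (A ` S)"
    and u: "square_integrable S u" and S: "S \<in> sets lebesgue"
  shows "square_integrable S (\<lambda>x. h (A x) (u x))"
proof -
  obtain B where "B > 0" and B: "\<And>a v. norm (h a v) \<le> B * norm a * norm v"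
    using bilinear_bounded_pos[OF h] by blast
  obtain C where C: "\<And>x. x \<in> S \<Longrightarrow> norm (A x) \<le> C"
    using A(2) by (auto simp: bounded_iff)
  show ?thesis
  proof (rule square_integrableI)
    show "(\<lambda>x. h (A x) (u x)) measurable_on S"
      using u A(1) by (simp add: square_integrable_def measurable_on_bilinear[OF h])
    show "(\<lambda>x. (B * C)\<^sup>2 * (norm (u x))\<^sup>2) integrable_on S"
      using u by (simp add: square_integrable_def integrable_on_mult_right)
    show "(norm (h (A x) (u x)))\<^sup>2 \<le> (B * C)\<^sup>2 * (norm (u x))\<^sup>2" if "x \<in> S" for x
    proof -
      have "norm (h (A x) (u x)) \<le> B * C * norm (u x)"
        using B[of "A x" "u x"] C[OF that] \<open>B > 0\<close>
        by (meson order_trans mult_left_mono mult_right_mono less_imp_le norm_ge_zero)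
      then show ?thesis
        by (simp add: power_mono flip: power_mult_distrib)
    qed
  qed (fact S)
qed

lemma square_integrable_subset:
  fixes h :: "real \<Rightarrow> complex^'n"
  assumes h: "square_integrable S h" and "T \<subseteq> S" "T \<in> sets lebesgue"
  shows "square_integrable T h"
proof -
  have "(\<lambda>x. if x \<in> S then h x else 0) measurable_on UNIV"
    using h by (simp add: square_integrable_def measurable_on_UNIV)
  from measurable_on_restrict[OF this \<open>T \<in> sets lebesgue\<close>]
  have "(\<lambda>x. if x \<in> T then h x else 0) measurable_on UNIV"
    using \<open>T \<subseteq> S\<close> by (simp add: subset_iff cong: if_cong)
  then have m: "h measurable_on T"
    by (simp add: measurable_on_UNIV)
  have "(\<lambda>x. (norm (h x))\<^sup>2) absolutely_integrable_on S"
    using h by (intro nonnegative_absolutely_integrable_1) (simp_all add: square_integrable_def)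
  then have "(\<lambda>x. (norm (h x))\<^sup>2) absolutely_integrable_on T"
    using set_integrable_subset assms(2,3) by blast
  with m show ?thesis
    by (simp add: square_integrable_def set_lebesgue_integral_eq_integral(1))
qed

lemma square_integrable_imp_absolutely_integrable:
  fixes h :: "real \<Rightarrow> complex^'n"
  assumes h: "square_integrable S h" and S: "S \<in> lmeasurable"
  shows "h absolutely_integrable_on S"
proof (rule measurable_bounded_by_integrable_imp_absolutely_integrable)
  show "h \<in> borel_measurable (lebesgue_on S)"
    using h S by (simp add: square_integrable_def measurable_on_iff_borel_measurable fmeasurableD)
  show "(\<lambda>x. 1 + (norm (h x))\<^sup>2) integrable_on S"
    using h S by (simp add: square_integrable_def integrable_add integrable_on_const)
  show "norm (h x) \<le> 1 + (norm (h x))\<^sup>2" for x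
  proof -
    have "0 \<le> (norm (h x) - 1)\<^sup>2"
      by simp
    then have "2 * norm (h x) \<le> 1 + (norm (h x))\<^sup>2"
      by (simp add: power2_diff)
    then show ?thesis
      using norm_ge_zero[of "h x"] by linarith
  qed
qed (use S fmeasurableD in blast)

lemma square_integrable_exp_decay:
  fixes p q :: "complex^'n"
  shows "square_integrable {0..} (\<lambda>x. exp (-x) *\<^sub>R p + exp (-2 * x) *\<^sub>R q)"
proof (rule square_integrableI)
  show "(\<lambda>x. exp (-x) *\<^sub>R p + exp (-2 * x) *\<^sub>R q) measurable_on {0..}"
    by (simp add: measurable_on_iff_borel_measurable continuous_imp_measurable_on_sets_lebesgue
                  continuous_intros)
  show "(\<lambda>x. (norm p + norm q)\<^sup>2 * exp (- 2 * x)) integrable_on {0..}"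
    by (intro integrable_on_mult_right integrable_on_exp_minus_to_infinity) simp
  show "(norm (exp (-x) *\<^sub>R p + exp (-2 * x) *\<^sub>R q))\<^sup>2 \<le> (norm p + norm q)\<^sup>2 * exp (- 2 * x)"
    if "x \<in> {0..}" for x
  proof -
    have exp_le: "exp (-2 * x) \<le> exp (-x)"
      using that by simp
    have "norm (exp (-x) *\<^sub>R p + exp (-2 * x) *\<^sub>R q) \<le> exp (-x) * norm p + exp (-x) * norm q"
      using norm_triangle_ineq[of "exp (-x) *\<^sub>R p" "exp (-2 * x) *\<^sub>R q"]
        mult_right_mono[OF exp_le norm_ge_zero[of q]]
      by simp
    then have "norm (exp (-x) *\<^sub>R p + exp (-2 * x) *\<^sub>R q) \<le> exp (-x) * (norm p + norm q)"
      by (simp add: distrib_left)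
    then have "(norm (exp (-x) *\<^sub>R p + exp (-2 * x) *\<^sub>R q))\<^sup>2 \<le> (exp (-x) * (norm p + norm q))\<^sup>2"
      by (simp add: power_mono)
    also have "\<dots> = (norm p + norm q)\<^sup>2 * exp (- 2 * x)"
      by (simp add: power_mult_distrib power2_eq_square flip: exp_add)
    finally show ?thesis .
  qed
qed simp

lemma le_integrable_on_long_intervals_imp_nonpos:
  fixes G :: "real \<Rightarrow> real"
  assumes G: "G integrable_on S" and le: "\<And>x. x \<in> S \<Longrightarrow> r \<le> G x"
    and long: "\<And>n::nat. \<exists>c. {c..c + real n} \<subseteq> S"
  shows "r \<le> 0"
proof (rule ccontr)
  assume "\<not> r \<le> 0"
  obtain n :: nat where n: "integral S G / r < real n"
    using reals_Archimedean2 by blast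
  obtain c where I: "{c..c + real n} \<subseteq> S"
    using long by blast
  have "real n * r = integral {c..c + real n} (\<lambda>x. r)"
    by simp
  also have "\<dots> \<le> integral {c..c + real n} G"
    using I le by (intro integral_le integrable_on_subinterval[OF G I]) auto
  also have "\<dots> \<le> integral S G"
    using I le \<open>\<not> r \<le> 0\<close> by (intro integral_subset_le integrable_on_subinterval[OF G I] G) force+
  finally show False
    using n \<open>\<not> r \<le> 0\<close> by (simp add: field_simps)
qed

definition glue_at_zero :: "(real \<Rightarrow> 'a) \<Rightarrow> (real \<Rightarrow> 'a) \<Rightarrow> real \<Rightarrow> 'a" where
  "glue_at_zero f g x = (if x \<le> 0 then f x else g x)"

lemma square_integrable_glue_at_zero:
  fixes f g :: "real \<Rightarrow> complex^'n"
  assumes f: "square_integrable {..0} f" and g: "square_integrable {0..} g"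
  shows "square_integrable UNIV (glue_at_zero f g)"
proof -
  have null: "negligible ({0::real..} - {0<..} \<union> ({0<..} - {0..}))"
    by (rule negligible_subset[OF negligible_sing[of 0]]) auto
  have "g measurable_on {0<..}" "(\<lambda>x. (norm (g x))\<^sup>2) integrable_on {0<..}"
    using g measurable_on_spike_set[OF _ null] integrable_spike_set_eq[OF null]
    by (auto simp: square_integrable_def)
  then have "(\<lambda>x. if x \<in> {0<..} then g x else 0) measurable_on UNIV"
    "(\<lambda>x. if x \<in> {0<..} then (norm (g x))\<^sup>2 else 0) integrable_on UNIV"
    by (simp_all only: measurable_on_UNIV integrable_restrict_UNIV)
  moreover have "(\<lambda>x. if x \<in> {..0} then f x else 0) measurable_on UNIV"
    "(\<lambda>x. if x \<in> {..0} then (norm (f x))\<^sup>2 else 0) integrable_on UNIV"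
    using f by (simp_all only: square_integrable_def measurable_on_UNIV integrable_restrict_UNIV)
  ultimately have "(\<lambda>x. (if x \<in> {..0} then f x else 0) + (if x \<in> {0<..} then g x else 0)) measurable_on UNIV"
    and "(\<lambda>x. (if x \<in> {..0} then (norm (f x))\<^sup>2 else 0) + (if x \<in> {0<..} then (norm (g x))\<^sup>2 else 0))
           integrable_on UNIV"
    by (auto intro: measurable_on_add integrable_add)
  moreover have "glue_at_zero f g = (\<lambda>x. (if x \<in> {..0} then f x else 0) + (if x \<in> {0<..} then g x else 0))"
    and "(\<lambda>x. (norm (glue_at_zero f g x))\<^sup>2)
          = (\<lambda>x. (if x \<in> {..0} then (norm (f x))\<^sup>2 else 0) + (if x \<in> {0<..} then (norm (g x))\<^sup>2 else 0))"
    by (auto simp: glue_at_zero_def)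
  ultimately show ?thesis
    by (simp only: square_integrable_def)
qed

lemma has_vector_derivative_glue_at_zero:
  assumes f: "\<And>x. x \<le> 0 \<Longrightarrow> (f has_vector_derivative f' x) (at x within {..0})"
    and g: "\<And>x. 0 \<le> x \<Longrightarrow> (g has_vector_derivative g' x) (at x within {0..})"
    and "f 0 = g 0" "f' 0 = g' 0"
  shows "(glue_at_zero f g has_vector_derivative glue_at_zero f' g' x) (at x)"
proof -
  have "((\<lambda>x. if x \<in> {..0} then f x else g x) has_vector_derivative
          (if x \<in> {..0} then f' x else g' x)) (at x within UNIV)"
  proof (rule has_vector_derivative_If_within_closures[where T = "{0<..}"])
    have "{..0} \<union> closure {..0} \<inter> closure {0<..} = {..0::real}"
      "{0<..} \<union> closure {..0} \<inter> closure {0<..} = {0::real..}"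
      by auto
    then show "x \<in> {..0} \<union> closure {..0} \<inter> closure {0<..} \<Longrightarrow>
        (f has_vector_derivative f' x) (at x within {..0} \<union> closure {..0} \<inter> closure {0<..})"
      "x \<in> {0<..} \<union> closure {..0} \<inter> closure {0<..} \<Longrightarrow>
        (g has_vector_derivative g' x) (at x within {0<..} \<union> closure {..0} \<inter> closure {0<..})"
      using f g by auto
  qed (use assms in auto)
  then show ?thesis
    by (simp add: glue_at_zero_def[abs_def])
qed

lemma has_integral_glue_at_zero:
  fixes f f' g g' :: "real \<Rightarrow> 'a::banach"
  assumes f: "\<And>a b. a \<le> b \<Longrightarrow> b \<le> 0 \<Longrightarrow> (f' has_integral (f b - f a)) {a..b}"
    and g: "\<And>a b. 0 \<le> a \<Longrightarrow> a \<le> b \<Longrightarrow> (g' has_integral (g b - g a)) {a..b}"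
    and "f 0 = g 0" and ab: "a \<le> b"
  shows "(glue_at_zero f' g' has_integral (glue_at_zero f g b - glue_at_zero f g a)) {a..b}"
proof -
  have left: "(glue_at_zero f' g' has_integral (glue_at_zero f g d - glue_at_zero f g c)) {c..d}"
    if "c \<le> d" "d \<le> 0" for c d
  proof -
    have "(glue_at_zero f' g' has_integral (f d - f c)) {c..d}"
      by (rule has_integral_spike[OF negligible_empty _ f[OF that]]) (use that in \<open>auto simp: glue_at_zero_def\<close>)
    then show ?thesis
      using that by (simp add: glue_at_zero_def)
  qed
  have right: "(glue_at_zero f' g' has_integral (glue_at_zero f g d - glue_at_zero f g c)) {c..d}"
    if "0 \<le> c" "c \<le> d" "0 < d" for c d
  proof -
    have "(glue_at_zero f' g' has_integral (g d - g c)) {c..d}"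
      by (rule has_integral_spike[OF negligible_sing[of 0] _ g[OF that(1,2)]])
        (use that in \<open>auto simp: glue_at_zero_def\<close>)
    then show ?thesis
      using that \<open>f 0 = g 0\<close> by (auto simp: glue_at_zero_def)
  qed
  consider "b \<le> 0" | "0 \<le> a" "0 < b" | "a < 0" "0 < b"
    by linarith
  then show ?thesis
  proof cases
    case 3
    then have "(glue_at_zero f' g' has_integral
        (glue_at_zero f g 0 - glue_at_zero f g a) + (glue_at_zero f g b - glue_at_zero f g 0)) {a..b}"
      by (intro has_integral_combine[where c = 0] left right) auto
    then show ?thesis by simp
  qed (use ab left right in auto)
qed

lemma H2_repr_zero: "S \<in> sets lebesgue \<Longrightarrow> H2_repr S (\<lambda>x. 0) (\<lambda>x. 0) (\<lambda>x. 0)"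
  by (simp add: H2_repr_def square_integrable_def integrable_0)

lemma H2_repr_diff:
  assumes \<psi>: "H2_repr S \<psi> \<psi>1 \<psi>2" and \<phi>: "H2_repr S \<phi> \<phi>1 \<phi>2" and S: "S \<in> sets lebesgue"
  shows "H2_repr S (\<lambda>x. \<psi> x - \<phi> x) (\<lambda>x. \<psi>1 x - \<phi>1 x) (\<lambda>x. \<psi>2 x - \<phi>2 x)"
  unfolding H2_repr_def
proof (intro conjI ballI impI)
  show "((\<lambda>x. \<psi> x - \<phi> x) has_vector_derivative \<psi>1 x - \<phi>1 x) (at x within S)" if "x \<in> S" for x
    using \<psi> \<phi> that unfolding H2_repr_def by (blast intro: has_vector_derivative_diff)
  show "((\<lambda>x. \<psi>2 x - \<phi>2 x) has_integral (\<psi>1 b - \<phi>1 b - (\<psi>1 a - \<phi>1 a))) {a..b}"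
    if "a \<in> S" "b \<in> S" "a \<le> b" for a b
  proof -
    have "(\<psi>2 has_integral (\<psi>1 b - \<psi>1 a)) {a..b}" "(\<phi>2 has_integral (\<phi>1 b - \<phi>1 a)) {a..b}"
      using \<psi> \<phi> that unfolding H2_repr_def by auto
    from has_integral_diff[OF this] show ?thesis
      by (simp add: algebra_simps)
  qed
  show "square_integrable S (\<lambda>x. \<psi> x - \<phi> x)" "square_integrable S (\<lambda>x. \<psi>1 x - \<phi>1 x)"
    "square_integrable S (\<lambda>x. \<psi>2 x - \<phi>2 x)"
    using \<psi> \<phi> S unfolding H2_repr_def by (simp_all add: square_integrable_diff)
qed

lemma H2_repr_subset:
  assumes "H2_repr S \<psi> \<psi>1 \<psi>2" and "T \<subseteq> S" "T \<in> sets lebesgue"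
  shows "H2_repr T \<psi> \<psi>1 \<psi>2"
  using assms unfolding H2_repr_def
  by (auto intro: has_vector_derivative_within_subset square_integrable_subset)

lemma H2_repr_has_integral:
  assumes "H2_repr S \<psi> \<psi>1 \<psi>2" and "a \<le> b" "{a..b} \<subseteq> S"
  shows "(\<psi>1 has_integral (\<psi> b - \<psi> a)) {a..b}" and "(\<psi>2 has_integral (\<psi>1 b - \<psi>1 a)) {a..b}"
proof -
  show "(\<psi>1 has_integral (\<psi> b - \<psi> a)) {a..b}"
  proof (rule fundamental_theorem_of_calculus[OF \<open>a \<le> b\<close>])
    fix x assume "x \<in> {a..b}"
    then show "(\<psi> has_vector_derivative \<psi>1 x) (at x within {a..b})"
      using assms unfolding H2_repr_def by (blast intro: has_vector_derivative_within_subset)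
  qed
  have "a \<in> S" "b \<in> S"
    using assms(2,3) by auto
  then show "(\<psi>2 has_integral (\<psi>1 b - \<psi>1 a)) {a..b}"
    using assms unfolding H2_repr_def by auto
qed

lemma H2_repr_glue_at_zero:
  assumes \<psi>: "H2_repr {0..} \<psi> \<psi>1 \<psi>2" and \<phi>: "H2_repr {..0} \<phi> \<phi>1 \<phi>2"
    and "\<phi> 0 = \<psi> 0" "\<phi>1 0 = \<psi>1 0"
  shows "H2_repr UNIV (glue_at_zero \<phi> \<psi>) (glue_at_zero \<phi>1 \<psi>1) (glue_at_zero \<phi>2 \<psi>2)"
  unfolding H2_repr_def
proof (intro conjI ballI impI)
  show "(glue_at_zero \<phi> \<psi> has_vector_derivative glue_at_zero \<phi>1 \<psi>1 x) (at x within UNIV)" for x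
    using assms by (intro has_vector_derivative_glue_at_zero) (auto simp: H2_repr_def)
  show "(glue_at_zero \<phi>2 \<psi>2 has_integral (glue_at_zero \<phi>1 \<psi>1 b - glue_at_zero \<phi>1 \<psi>1 a)) {a..b}"
    if "a \<le> b" for a b
    using assms that by (intro has_integral_glue_at_zero) (auto simp: H2_repr_def)
  show "square_integrable UNIV (glue_at_zero \<phi> \<psi>)" "square_integrable UNIV (glue_at_zero \<phi>1 \<psi>1)"
    "square_integrable UNIV (glue_at_zero \<phi>2 \<psi>2)"
    using assms by (auto intro: square_integrable_glue_at_zero simp: H2_repr_def)
qed

lemma H2_repr_exp_decay:
  fixes p q :: "complex^'n"
  shows "H2_repr {0..} (\<lambda>x. exp (-x) *\<^sub>R p + exp (-2 * x) *\<^sub>R q)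
           (\<lambda>x. exp (-x) *\<^sub>R (- p) + exp (-2 * x) *\<^sub>R (- 2 *\<^sub>R q))
           (\<lambda>x. exp (-x) *\<^sub>R p + exp (-2 * x) *\<^sub>R (4 *\<^sub>R q))"
  unfolding H2_repr_def
proof (intro conjI ballI impI)
  have deriv: "((\<lambda>x. exp (-x) *\<^sub>R a + exp (-2 * x) *\<^sub>R b) has_vector_derivative
      exp (-x) *\<^sub>R (- a) + exp (-2 * x) *\<^sub>R (- 2 *\<^sub>R b)) (at x)" for a b :: "complex^'n" and x
    by (auto intro!: derivative_eq_intros simp: algebra_simps)
  show "((\<lambda>x. exp (-x) *\<^sub>R p + exp (-2 * x) *\<^sub>R q) has_vector_derivative
      exp (-x) *\<^sub>R (- p) + exp (-2 * x) *\<^sub>R (- 2 *\<^sub>R q)) (at x within {0..})" for x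
    using deriv by (rule has_vector_derivative_at_within)
  show "((\<lambda>x. exp (-x) *\<^sub>R p + exp (-2 * x) *\<^sub>R (4 *\<^sub>R q)) has_integral
      (exp (-b) *\<^sub>R (- p) + exp (-2 * b) *\<^sub>R (- 2 *\<^sub>R q)) - (exp (-a) *\<^sub>R (- p) + exp (-2 * a) *\<^sub>R (- 2 *\<^sub>R q))) {a..b}"
    if "a \<le> b" for a b
    using deriv[of "- p" "- 2 *\<^sub>R q"] that
    by (intro fundamental_theorem_of_calculus) (auto intro: has_vector_derivative_at_within)
qed (rule square_integrable_exp_decay)+

lemma H2_repr_Cauchy_data:
  fixes x0 x1 :: "complex^'n"
  obtains u u1 u2 where "H2_repr {0..} u u1 u2" and "u 0 = x0" and "u1 0 = x1"
  by (rule that[OF H2_repr_exp_decay[of "2 *\<^sub>R x0 + x1" "- (x0 + x1)"]]) (simp_all add: scaleR_2)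

section \<open>The boundary-value spaces\<close>

definition H2_solution :: "real set \<Rightarrow> (real \<Rightarrow> complex^'n^'n) \<Rightarrow> real \<Rightarrow> (real \<Rightarrow> complex^'n)
    \<Rightarrow> (real \<Rightarrow> complex^'n) \<Rightarrow> (real \<Rightarrow> complex^'n) \<Rightarrow> bool" where
  "H2_solution S V E \<psi> \<psi>1 \<psi>2 \<longleftrightarrow> H2_repr S \<psi> \<psi>1 \<psi>2 \<and>
     negligible {x\<in>S. \<psi>2 x \<noteq> V x *v \<psi> x - complex_of_real E *s \<psi> x}"

lemma ell_eq: "ell S V E = {(\<psi> 0, \<psi>1 0) | \<psi> \<psi>1 \<psi>2. H2_solution S V E \<psi> \<psi>1 \<psi>2}"
  by (simp add: ell_def H2_solution_def)

lemma ell_memI: "H2_solution S V E \<psi> \<psi>1 \<psi>2 \<Longrightarrow> (\<psi> 0, \<psi>1 0) \<in> ell S V E"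
  unfolding ell_eq by blast

lemma H2_solution_diff:
  assumes u: "H2_repr S u u1 u2" and w: "H2_repr S w w1 w2" and S: "S \<in> sets lebesgue"
    and eq: "negligible {t\<in>S. - w2 t + V t *v w t - complex_of_real E *s w t \<noteq>
                               - u2 t + V t *v u t - complex_of_real E *s u t}"
  shows "H2_solution S V E (\<lambda>t. u t - w t) (\<lambda>t. u1 t - w1 t) (\<lambda>t. u2 t - w2 t)"
  unfolding H2_solution_def
proof
  show "H2_repr S (\<lambda>t. u t - w t) (\<lambda>t. u1 t - w1 t) (\<lambda>t. u2 t - w2 t)"
    by (rule H2_repr_diff[OF u w S])
  show "negligible {t\<in>S. u2 t - w2 t \<noteq> V t *v (u t - w t) - complex_of_real E *s (u t - w t)}"
    by (rule negligible_subset[OF eq])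
      (auto simp: matrix_vector_mult_diff_distrib vector_ssub_ldistrib algebra_simps)
qed

lemma square_integrable_Schrodinger:
  fixes V :: "real \<Rightarrow> complex^'n^'n"
  assumes bdd: "bounded (range V)" and meas: "V measurable_on UNIV"
    and u: "H2_repr S u u1 u2" and S: "S \<in> sets lebesgue"
  shows "square_integrable S (\<lambda>t. - u2 t + V t *v u t - complex_of_real E *s u t)"
proof -
  have su: "square_integrable S u" and su2: "square_integrable S u2"
    using u by (simp_all add: H2_repr_def)
  from measurable_on_restrict[OF meas S] have "V measurable_on S"
    by (simp only: measurable_on_UNIV)
  moreover have "bounded (V ` S)"
    using bdd by (rule bounded_subset) auto
  ultimately have "square_integrable S (\<lambda>t. V t *v u t)"
    by (rule square_integrable_bilinear[OF bilinear_matrix_vector_mult _ _ su S])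
  moreover have "square_integrable S (\<lambda>t. E *\<^sub>R u t)"
    using bilinear_conv_bounded_bilinear[THEN iffD2, OF bounded_bilinear_scaleR]
    by (rule square_integrable_bilinear[where A = "\<lambda>_. E", OF _ _ _ su S])
       (simp_all add: S image_constant_conv)
  ultimately have "square_integrable S (\<lambda>t. (V t *v u t - E *\<^sub>R u t) - u2 t)"
    by (intro square_integrable_diff su2 S)
  moreover have "(\<lambda>t. (V t *v u t - E *\<^sub>R u t) - u2 t) = (\<lambda>t. - u2 t + V t *v u t - complex_of_real E *s u t)"
    by (simp add: fun_eq_iff of_real_vector_smult)
  ultimately show ?thesis
    by simp
qed

lemma has_integral_omega_H2_repr:
  assumes \<psi>: "H2_repr S \<psi> \<psi>1 \<psi>2" and \<phi>: "H2_repr S \<phi> \<phi>1 \<phi>2"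
    and S: "S \<in> sets lebesgue" and ab: "a \<le> b" "{a..b} \<subseteq> S"
  shows "((\<lambda>x. cinner (\<psi> x) (\<phi>2 x) - cinner (\<psi>2 x) (\<phi> x)) has_integral
           omega (\<psi> b, \<psi>1 b) (\<phi> b, \<phi>1 b) - omega (\<psi> a, \<psi>1 a) (\<phi> a, \<phi>1 a)) {a..b}"
proof -
  have abs_int: "h absolutely_integrable_on {a..b}" if "square_integrable S h" for h
    using square_integrable_subset[OF that ab(2)] by (simp add: square_integrable_imp_absolutely_integrable)
  have indef: "(\<psi>1 has_integral (\<psi> x - \<psi> a)) {a..x}" "(\<psi>2 has_integral (\<psi>1 x - \<psi>1 a)) {a..x}"
    "(\<phi>1 has_integral (\<phi> x - \<phi> a)) {a..x}" "(\<phi>2 has_integral (\<phi>1 x - \<phi>1 a)) {a..x}"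
    if "x \<in> {a..b}" for x
  proof -
    have "a \<le> x" "{a..x} \<subseteq> S"
      using that ab by auto
    then show "(\<psi>1 has_integral (\<psi> x - \<psi> a)) {a..x}" "(\<psi>2 has_integral (\<psi>1 x - \<psi>1 a)) {a..x}"
      "(\<phi>1 has_integral (\<phi> x - \<phi> a)) {a..x}" "(\<phi>2 has_integral (\<phi>1 x - \<phi>1 a)) {a..x}"
      using H2_repr_has_integral[OF \<psi>] H2_repr_has_integral[OF \<phi>] by auto
  qed
  have cinner: "bounded_bilinear cinner"
    using bilinear_cinner by (simp add: bilinear_conv_bounded_bilinear)
  note ibp = integration_by_parts_indefinite_integrals[OF cinner ab(1)]
  have "((\<lambda>x. (cinner (\<psi>1 x) (\<phi>1 x) + cinner (\<psi> x) (\<phi>2 x)) - (cinner (\<psi>2 x) (\<phi> x) + cinner (\<psi>1 x) (\<phi>1 x)))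
      has_integral (cinner (\<psi> b) (\<phi>1 b) - cinner (\<psi> a) (\<phi>1 a)) - (cinner (\<psi>1 b) (\<phi> b) - cinner (\<psi>1 a) (\<phi> a))) {a..b}"
    using \<psi> \<phi> unfolding H2_repr_def
    by (intro has_integral_diff ibp abs_int indef) auto
  then show ?thesis
    by (simp add: omega_def algebra_simps)
qed

lemma omega_H2_solutions_const:
  assumes herm: "\<forall>x. hermitian_mat (V x)"
    and \<psi>: "H2_solution S V E \<psi> \<psi>1 \<psi>2" and \<phi>: "H2_solution S V E \<phi> \<phi>1 \<phi>2"
    and S: "S \<in> sets lebesgue" and ab: "a \<le> b" "{a..b} \<subseteq> S"
  shows "omega (\<psi> b, \<psi>1 b) (\<phi> b, \<phi>1 b) = omega (\<psi> a, \<psi>1 a) (\<phi> a, \<phi>1 a)"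
proof -
  have "((\<lambda>x. cinner (\<psi> x) (\<phi>2 x) - cinner (\<psi>2 x) (\<phi> x)) has_integral 0) {a..b}"
  proof (rule has_integral_spike[OF _ _ has_integral_0])
    show "negligible ({x\<in>S. \<psi>2 x \<noteq> V x *v \<psi> x - complex_of_real E *s \<psi> x} \<union>
                      {x\<in>S. \<phi>2 x \<noteq> V x *v \<phi> x - complex_of_real E *s \<phi> x})"
      using \<psi> \<phi> by (simp add: H2_solution_def)
    fix x
    assume "x \<in> {a..b} - ({x\<in>S. \<psi>2 x \<noteq> V x *v \<psi> x - complex_of_real E *s \<psi> x} \<union>
                           {x\<in>S. \<phi>2 x \<noteq> V x *v \<phi> x - complex_of_real E *s \<phi> x})"
    then have "\<psi>2 x = V x *v \<psi> x - complex_of_real E *s \<psi> x" "\<phi>2 x = V x *v \<phi> x - complex_of_real E *s \<phi> x"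
      using ab by auto
    then show "cinner (\<psi> x) (\<phi>2 x) - cinner (\<psi>2 x) (\<phi> x) = 0"
      using cinner_hermitian_mat_shift[OF herm[rule_format, of x]] by simp
  qed
  moreover have "H2_repr S \<psi> \<psi>1 \<psi>2" "H2_repr S \<phi> \<phi>1 \<phi>2"
    using \<psi> \<phi> by (simp_all add: H2_solution_def)
  note has_integral_omega_H2_repr[OF this S ab]
  ultimately have "omega (\<psi> b, \<psi>1 b) (\<phi> b, \<phi>1 b) - omega (\<psi> a, \<psi>1 a) (\<phi> a, \<phi>1 a) = 0"
    using has_integral_unique by blast
  then show ?thesis
    by simp
qed

lemma isotropic_ell_half_line:
  assumes herm: "\<forall>x. hermitian_mat (V x)" and S: "S = {0..} \<or> S = {..0}"
  shows "isotropic (ell S V E)"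
  unfolding isotropic_def ell_eq
proof (clarify)
  fix \<psi> \<psi>1 \<psi>2 \<phi> \<phi>1 \<phi>2
  assume \<psi>: "H2_solution S V E \<psi> \<psi>1 \<psi>2" and \<phi>: "H2_solution S V E \<phi> \<phi>1 \<phi>2"
  define W where "W x = omega (\<psi> x, \<psi>1 x) (\<phi> x, \<phi>1 x)" for x
  define G where "G x = (norm (\<psi> x))\<^sup>2 + (norm (\<phi>1 x))\<^sup>2 + ((norm (\<psi>1 x))\<^sup>2 + (norm (\<phi> x))\<^sup>2)" for x
  have "G integrable_on S"
    using \<psi> \<phi> unfolding G_def H2_solution_def H2_repr_def square_integrable_def
    by (intro integrable_add) auto
  moreover have "norm (W 0) \<le> G x" if "x \<in> S" for x
  proof -
    have "{min 0 x..max 0 x} \<subseteq> S"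
      using S that by auto
    then have "W 0 = W x"
      using omega_H2_solutions_const[OF herm \<psi> \<phi>, of "min 0 x" "max 0 x"] S
      by (cases "0 \<le> x") (auto simp: W_def)
    also have "norm (W x) \<le> norm (cinner (\<psi> x) (\<phi>1 x)) + norm (cinner (\<psi>1 x) (\<phi> x))"
      by (simp add: W_def omega_def norm_triangle_ineq4)
    also have "\<dots> \<le> norm (\<psi> x) * norm (\<phi>1 x) + norm (\<psi>1 x) * norm (\<phi> x)"
      by (intro add_mono cinner_norm_le)
    also have "\<dots> \<le> G x"
    proof -
      have "s * t \<le> s\<^sup>2 + t\<^sup>2" if "0 \<le> s" "0 \<le> t" for s t :: real
        using sum_squares_bound[of s t] mult_nonneg_nonneg[OF that] by linarith
      then show ?thesis
        unfolding G_def by (intro add_mono) simp_all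
    qed
    finally show ?thesis .
  qed
  moreover have "\<exists>c. {c..c + real n} \<subseteq> S" for n
    using S by (auto intro: exI[of _ 0] exI[of _ "- real n"])
  ultimately have "norm (W 0) \<le> 0"
    by (rule le_integrable_on_long_intervals_imp_nonpos)
  then show "omega (\<psi> 0, \<psi>1 0) (\<phi> 0, \<phi>1 0) = 0"
    by (simp add: W_def)
qed

lemma H2_solution_UNIV_eq_0:
  assumes "complex_of_real E \<notin> schrodinger_spectrum V" and "H2_solution UNIV V E \<psi> \<psi>1 \<psi>2"
  shows "\<psi> x = 0"
proof -
  have "{x. - \<psi>2 x + V x *v \<psi> x - complex_of_real E *s \<psi> x \<noteq> 0}
      = {x\<in>UNIV. \<psi>2 x \<noteq> V x *v \<psi> x - complex_of_real E *s \<psi> x}"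
    by (auto simp: algebra_simps)
  then have "H2_repr UNIV \<psi> \<psi>1 \<psi>2 \<and> negligible {x. - \<psi>2 x + V x *v \<psi> x - complex_of_real E *s \<psi> x \<noteq> 0}"
    using assms(2) unfolding H2_solution_def by (subst (asm) eq_commute) simp
  then show ?thesis
    using assms(1) unfolding schrodinger_spectrum_def by blast
qed

lemma H2_solvable:
  assumes "complex_of_real E \<notin> schrodinger_spectrum V" and "square_integrable UNIV f"
  obtains \<psi> \<psi>1 \<psi>2 where "H2_repr UNIV \<psi> \<psi>1 \<psi>2"
    and "negligible {x. - \<psi>2 x + V x *v \<psi> x - complex_of_real E *s \<psi> x \<noteq> f x}"
  using assms unfolding schrodinger_spectrum_def by blast

lemma zero_mem_ell: "S \<in> sets lebesgue \<Longrightarrow> 0 \<in> ell S V E"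
  using ell_memI[of S V E "\<lambda>x. 0" "\<lambda>x. 0" "\<lambda>x. 0"]
  by (simp add: H2_solution_def H2_repr_zero zero_prod_def)

lemma H2_solution_glue_at_zero:
  assumes \<psi>: "H2_solution {0..} V E \<psi> \<psi>1 \<psi>2" and \<phi>: "H2_solution {..0} V E \<phi> \<phi>1 \<phi>2"
    and "\<phi> 0 = \<psi> 0" "\<phi>1 0 = \<psi>1 0"
  shows "H2_solution UNIV V E (glue_at_zero \<phi> \<psi>) (glue_at_zero \<phi>1 \<psi>1) (glue_at_zero \<phi>2 \<psi>2)"
  unfolding H2_solution_def
proof
  show "H2_repr UNIV (glue_at_zero \<phi> \<psi>) (glue_at_zero \<phi>1 \<psi>1) (glue_at_zero \<phi>2 \<psi>2)"
    using assms by (intro H2_repr_glue_at_zero) (simp_all add: H2_solution_def)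
  have "negligible ({x\<in>{..0}. \<phi>2 x \<noteq> V x *v \<phi> x - complex_of_real E *s \<phi> x} \<union>
                    {x\<in>{0..}. \<psi>2 x \<noteq> V x *v \<psi> x - complex_of_real E *s \<psi> x})"
    using \<psi> \<phi> by (simp add: H2_solution_def)
  then show "negligible {x\<in>UNIV. glue_at_zero \<phi>2 \<psi>2 x \<noteq>
      V x *v glue_at_zero \<phi> \<psi> x - complex_of_real E *s glue_at_zero \<phi> \<psi> x}"
    by (rule negligible_subset) (auto simp: glue_at_zero_def)
qed

lemma ell_plus_inter_ell_minus:
  assumes notspec: "complex_of_real E \<notin> schrodinger_spectrum V"
  shows "ell_plus V E \<inter> ell_minus V E = {0}"
proof
  show "{0} \<subseteq> ell_plus V E \<inter> ell_minus V E"
    by (simp add: ell_plus_def ell_minus_def zero_mem_ell)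
  show "ell_plus V E \<inter> ell_minus V E \<subseteq> {0}"
  proof
    fix p
    assume "p \<in> ell_plus V E \<inter> ell_minus V E"
    then obtain \<psi> \<psi>1 \<psi>2 \<phi> \<phi>1 \<phi>2 where p: "p = (\<phi> 0, \<phi>1 0)"
      and \<psi>: "H2_solution {0..} V E \<psi> \<psi>1 \<psi>2" and \<phi>: "H2_solution {..0} V E \<phi> \<phi>1 \<phi>2"
      and "\<psi> 0 = \<phi> 0" "\<psi>1 0 = \<phi>1 0"
      unfolding ell_plus_def ell_minus_def ell_eq by auto
    then have glued: "H2_solution UNIV V E (glue_at_zero \<phi> \<psi>) (glue_at_zero \<phi>1 \<psi>1) (glue_at_zero \<phi>2 \<psi>2)"
      by (intro H2_solution_glue_at_zero) simp_all
    then have "glue_at_zero \<phi> \<psi> = (\<lambda>x. 0)"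
      using H2_solution_UNIV_eq_0[OF notspec] by blast
    moreover have "(glue_at_zero \<phi> \<psi> has_vector_derivative glue_at_zero \<phi>1 \<psi>1 0) (at 0)"
      using glued by (simp add: H2_solution_def H2_repr_def)
    ultimately have "glue_at_zero \<phi>1 \<psi>1 0 = 0"
      using vector_derivative_unique_at has_vector_derivative_const by metis
    with \<open>glue_at_zero \<phi> \<psi> = (\<lambda>x. 0)\<close> show "p \<in> {0}"
      by (auto simp: p glue_at_zero_def fun_eq_iff zero_prod_def dest: spec[of _ 0])
  qed
qed

lemma ell_plus_ell_minus_span:
  fixes V :: "real \<Rightarrow> complex^'n^'n"
  assumes bdd: "bounded (range V)" and meas: "V measurable_on UNIV"
    and notspec: "complex_of_real E \<notin> schrodinger_spectrum V"
  shows "\<exists>a\<in>ell_plus V E. \<exists>b\<in>ell_minus V E. x = a + b"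
proof -
  obtain x0 x1 where x: "x = (x0, x1)"
    by fastforce
  obtain u u1 u2 where u: "H2_repr {0..} u u1 u2" and "u 0 = x0" "u1 0 = x1"
    by (rule H2_repr_Cauchy_data)
  define g where "g t = - u2 t + V t *v u t - complex_of_real E *s u t" for t
  have "square_integrable UNIV (glue_at_zero (\<lambda>t. 0) g)"
    using square_integrable_Schrodinger[OF bdd meas u] unfolding g_def
    by (intro square_integrable_glue_at_zero) (simp_all add: square_integrable_def integrable_0)
  then obtain w w1 w2 where w: "H2_repr UNIV w w1 w2"
    and eq: "negligible {t. - w2 t + V t *v w t - complex_of_real E *s w t \<noteq> glue_at_zero (\<lambda>t. 0) g t}"
    using H2_solvable[OF notspec] by blast
  have "H2_solution {..0} V E w w1 w2"
    unfolding H2_solution_def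
  proof
    show "H2_repr {..0} w w1 w2"
      using w by (rule H2_repr_subset) auto
    show "negligible {t\<in>{..0}. w2 t \<noteq> V t *v w t - complex_of_real E *s w t}"
      by (rule negligible_subset[OF eq]) (auto simp: glue_at_zero_def diff_eq_eq)
  qed
  then have "(w 0, w1 0) \<in> ell_minus V E"
    using ell_memI by (fastforce simp: ell_minus_def)
  have "H2_solution {0..} V E (\<lambda>t. u t - w t) (\<lambda>t. u1 t - w1 t) (\<lambda>t. u2 t - w2 t)"
  proof (rule H2_solution_diff[OF u H2_repr_subset[OF w]])
    show "negligible {t\<in>{0..}. - w2 t + V t *v w t - complex_of_real E *s w t \<noteq>
                                 - u2 t + V t *v u t - complex_of_real E *s u t}"
      by (rule negligible_subset[OF negligible_Un[OF eq negligible_sing[of 0]]])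
        (auto simp: glue_at_zero_def g_def)
  qed auto
  then have "(u 0 - w 0, u1 0 - w1 0) \<in> ell_plus V E"
    using ell_memI by (fastforce simp: ell_plus_def)
  moreover have "x = (u 0 - w 0, u1 0 - w1 0) + (w 0, w1 0)"
    using x \<open>u 0 = x0\<close> \<open>u1 0 = x1\<close> by simp
  ultimately show ?thesis
    using \<open>(w 0, w1 0) \<in> ell_minus V E\<close> by blast
qed

theorem theorem2p19:
  fixes V :: "real \<Rightarrow> complex^'n^'n" and E :: real
  assumes herm: "\<forall>x. hermitian_mat (V x)"
    and bdd: "bounded (range V)"
    and meas: "V measurable_on UNIV"
    and notspec: "complex_of_real E \<notin> schrodinger_spectrum V"
  shows "lagrangian (ell_plus V E) \<and> lagrangian (ell_minus V E) \<and>
         ell_plus V E \<inter> ell_minus V E = {0} \<and>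
         (\<forall>x. \<exists>a\<in>ell_plus V E. \<exists>b\<in>ell_minus V E. x = a + b)"
proof -
  have plus: "isotropic (ell_plus V E)" and minus: "isotropic (ell_minus V E)"
    unfolding ell_plus_def ell_minus_def using isotropic_ell_half_line[OF herm] by auto
  have span: "\<exists>a\<in>ell_plus V E. \<exists>b\<in>ell_minus V E. x = a + b" for x
    using ell_plus_ell_minus_span[OF bdd meas notspec] .
  then have "\<exists>b\<in>ell_minus V E. \<exists>a\<in>ell_plus V E. x = b + a" for x
    by (metis add.commute)
  then show ?thesis
    using lagrangian_if_isotropic_complement[OF plus minus span]
      lagrangian_if_isotropic_complement[OF minus plus] ell_plus_inter_ell_minus[OF notspec] span
    by blast
qed

end
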